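(* Let $S=(\mathcal{X},\mathcal{X}_0,\mathcal{U},\delta,\mathcal{Y},\mathcal{H})$ be a transition system that has free input, is deterministic, and satisfies $\mathcal{X}_0=\mathcal{X}$. Let $\ell\ge 0$ be an integer, let $S_\ell=(\mathcal{X}_\ell,\mathcal{X}_{\ell0},\mathcal{U},\delta_\ell,\mathcal{Y},\mathcal{H}_\ell)$ be the strongest asynchronous $\ell$-complete abstraction (SA$\ell$CA) of $S$, and let $$\mathcal{R}=\{(x,\zeta)\in\mathcal{X}\times\mathcal{X}_\ell:\ \zeta\in\mathcal{E}_\ell(x)\}.$$ Then $\mathcal{R}$ is a simulation relation from $S$ to $S_\ell$ with respect to $\mathcal{U}\times\mathcal{Y}$. Further, if $S$ has free input, the inverse relation $\mathcal{R}^{-1}=\{(\zeta,x):(x,\zeta)\in\mathcal{R}\}$ is an alternating simulation relation from $S_\ell$ to $S$ with respect to $\mathcal{U}\times\mathcal{Y}$.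
   Context: A transition system (TS) is a tuple $S=(\mathcal{X},\mathcal{X}_0,\mathcal{U},\delta,\mathcal{Y},\mathcal{H})$: state set $\mathcal{X}$, initial set $\mathcal{X}_0\subseteq\mathcal{X}$, finite input set $\mathcal{U}$, output set $\mathcal{Y}$, transition relation $\delta\subseteq\mathcal{X}\times\mathcal{U}\times\mathcal{X}$, output map $\mathcal{H}:\mathcal{X}\to\mathcal{Y}$. Let $\mathrm{Post}_u(x)=\{x':(x,u,x')\in\delta\}$ and $U_\delta(x)=\{u:\mathrm{Post}_u(x)\neq\emptyset\}$. $S$ is non-blocking if $U_\delta(x)\ne\emptyset$ for all $x$, has free input if $U_\delta(x)=\mathcal{U}$ for all $x$, and is deterministic if $|\mathrm{Post}_u(x)|=1$ for all $x,u$. An $H$-long internal behavior is $\xi=x_0u_0x_1\dots u_{H-1}x_H$ with $x_0\in\mathcal{X}_0$ and $(x_i,u_i,x_{i+1})\in\delta$; its external behavior is $\mathcal{H}(\xi)=y_0u_0y_1\dots u_{H-1}y_H$ with $y_i=\mathcal{H}(x_i)$. $\mathcal{I}_H(S)$, $\mathcal{B}_H(S)$ denote the sets of all $H$-long internal/external behaviors. For a sequence $s=m_0a_0\dots a_{n-1}m_n$, $s(i)=m_i$ and $s[i,i+j]=m_ia_i\dots a_{i+j-1}m_{i+j}$; behaviors are extended to negative indices by a padding symbol $\diamond$ (all state/output and input entries with index $\le -1$ equal $\diamond$), so $s[k-\ell,k]$ is defined for every $k\ge 0$. Concatenation: for $s=m_0a_0\dots m_i$ and $s'=m'_0a'_0\dots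 m'_j$ with $m_i=m'_0$, $s\cdot s'=m_0a_0\dots a_{i-1}m'_0a'_0\dots m'_j$. $\ell$-sequences: $\Pi_\ell=\bigcup_{\gamma\in\mathcal{B}_H(S)}\bigcup_{k\in[0,H]}\gamma[k-\ell,k]$ (for any $H>\ell$; under $\mathcal{X}_0=\mathcal{X}$ this does not depend on $H$); each contains $\ell+1$ outputs and $\ell$ inputs. Corresponding external strings of $x$: $\mathcal{E}_\ell(x)=\{\zeta\in\Pi_\ell:\exists\xi \text{ internal behavior},\exists j\ge0,\ \zeta=\mathcal{H}(\xi[j-\ell,j])\wedge\xi(j)=x\}$. SA$\ell$CA of $S$: $S_\ell=(\mathcal{X}_\ell,\mathcal{X}_{\ell0},\mathcal{U},\delta_\ell,\mathcal{Y},\mathcal{H}_\ell)$ with $\mathcal{X}_\ell=\Pi_\ell$; $\mathcal{X}_{\ell0}$ the set of $\ell$-sequences of the form $\mathcal{H}(\xi[-\ell,0])$ for internal behaviors $\xi$ (i.e. $\diamond$-padding followed by an initial output); $\mathcal{H}_\ell(\zeta)=\zeta(\ell)$; and $(\zeta,u,\zeta')\in\delta_\ell$ iff $\zeta[1,\ell]=\zeta'[0,\ell-1]$, the last input of $\zeta'$ equals $u$, and $\zeta\cdot\zeta'[\ell-1,\ell]\in\Pi_{\ell+1}$. Simulation relation (SR) from $S_a$ to $S_b$ (non-blocking, same inputs $\mathcal{U}$ and outputs $\mathcal{Y}$) w.r.t. $\mathcal{U}\times\mathcal{Y}$: $\mathcal{R}\subseteq\mathcal{X}_a\times\mathcal{X}_b$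 such that (i) every $x_{a0}\in\mathcal{X}_{a0}$ is related to some $x_{b0}\in\mathcal{X}_{b0}$; (ii) $(x_a,x_b)\in\mathcal{R}\Rightarrow\mathcal{H}_a(x_a)=\mathcal{H}_b(x_b)$; (iii) $(x_a,x_b)\in\mathcal{R}\Rightarrow U_{\delta_a}(x_a)\subseteq U_{\delta_b}(x_b)$ and for all $u\in U_{\delta_a}(x_a)$, $(x_a,u,x_a')\in\delta_a$ implies there is $x_b'$ with $(x_b,u,x_b')\in\delta_b$ and $(x_a',x_b')\in\mathcal{R}$. Alternating simulation relation (ASR) from $S_b$ to $S_a$ w.r.t. $\mathcal{U}\times\mathcal{Y}$: $\mathcal{R}\subseteq\mathcal{X}_b\times\mathcal{X}_a$ such that (i) every $x_{b0}\in\mathcal{X}_{b0}$ is related to some $x_{a0}\in\mathcal{X}_{a0}$; (ii) $(x_b,x_a)\in\mathcal{R}\Rightarrow\mathcal{H}_b(x_b)=\mathcal{H}_a(x_a)$; (iii) $(x_b,x_a)\in\mathcal{R}\Rightarrow U_{\delta_b}(x_b)\subseteq U_{\delta_a}(x_a)$ and for all $u\in U_{\delta_b}(x_b)$, $(x_a,u,x_a')\in\delta_a$ implies there is $x_b'$ with $(x_b,u,x_b')\in\delta_b$ and $(x_b',x_a')\in\mathcal{R}$. *)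

theory Defs
  imports Main
begin

record ('x, 'u, 'y) ts =
  St   :: "'x set"
  St0  :: "'x set"
  Inp  :: "'u set"
  Tr   :: "('x \<times> 'u \<times> 'x) set"
  Out  :: "'y set"
  Obs  :: "'x \<Rightarrow> 'y"

definition ts_wf :: "('x, 'u, 'y) ts \<Rightarrow> bool" where
  "ts_wf S \<longleftrightarrow> St0 S \<subseteq> St S \<and> Tr S \<subseteq> St S \<times> Inp S \<times> St S
     \<and> finite (Inp S) \<and> Obs S ` St S \<subseteq> Out S"

definition Post :: "('x, 'u, 'y) ts \<Rightarrow> 'u \<Rightarrow> 'x \<Rightarrow> 'x set" where
  "Post S u x = {x'. (x, u, x') \<in> Tr S}"

definition Uen :: "('x, 'u, 'y) ts \<Rightarrow> 'x \<Rightarrow> 'u set" where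
  "Uen S x = {u. Post S u x \<noteq> {}}"

definition non_blocking :: "('x, 'u, 'y) ts \<Rightarrow> bool" where
  "non_blocking S \<longleftrightarrow> (\<forall>x\<in>St S. Uen S x \<noteq> {})"

definition free_input :: "('x, 'u, 'y) ts \<Rightarrow> bool" where
  "free_input S \<longleftrightarrow> (\<forall>x\<in>St S. Uen S x = Inp S)"

definition deterministic :: "('x, 'u, 'y) ts \<Rightarrow> bool" where
  "deterministic S \<longleftrightarrow> (\<forall>x\<in>St S. \<forall>u\<in>Inp S. card (Post S u x) = 1)"

text \<open>An n-long internal behavior x_0 u_0 x_1 ... u_{n-1} x_n, given by the
  state sequence xs and the input sequence us (entries beyond n are irrelevant).\<close>
definition int_beh :: "('x, 'u, 'y) ts \<Rightarrow> nat \<Rightarrow> (nat \<Rightarrow> 'x) \<Rightarrow> (nat \<Rightarrow> 'u) \<Rightarrow> bool" where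
  "int_beh S n xs us \<longleftrightarrow> xs 0 \<in> St0 S \<and> (\<forall>i<n. (xs i, us i, xs (Suc i)) \<in> Tr S)"

text \<open>Window s[k-l, k] of a sequence (f, g) (f: states/outputs, g: inputs),
  with padding symbol \<diamond> represented by None for negative indices.\<close>
definition win :: "nat \<Rightarrow> nat \<Rightarrow> (nat \<Rightarrow> 'a) \<Rightarrow> (nat \<Rightarrow> 'b) \<Rightarrow> 'a option list \<times> 'b option list" where
  "win l k f g =
     (map (\<lambda>j. if k + j < l then None else Some (f (k + j - l))) [0..<Suc l],
      map (\<lambda>j. if k + j < l then None else Some (g (k + j - l))) [0..<l])"

definition Pi :: "('x, 'u, 'y) ts \<Rightarrow> nat \<Rightarrow> ('y option list \<times> 'u option list) set" where
  "Pi S l = {win l k (Obs S \<circ> xs) us | n k xs us. l < n \<and> k \<le> n \<and> int_beh S n xs us}"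

definition Estr :: "('x, 'u, 'y) ts \<Rightarrow> nat \<Rightarrow> 'x \<Rightarrow> ('y option list \<times> 'u option list) set" where
  "Estr S l x = {\<zeta> \<in> Pi S l. \<exists>n j xs us. int_beh S n xs us \<and> j \<le> n
                      \<and> \<zeta> = win l j (Obs S \<circ> xs) us \<and> xs j = x}"

text \<open>For zeta = (ys, us) and zeta' = (ys', us'):  zeta[1,l] = zeta'[0,l-1] means
  tl ys = butlast ys' and tl us = butlast us'; the last input of zeta' is u;
  and zeta . zeta'[l-1,l] = (ys @ [last ys'], us @ [u]) lies in Pi_{l+1}.\<close>
definition SA :: "('x, 'u, 'y) ts \<Rightarrow> nat \<Rightarrow> ('y option list \<times> 'u option list, 'u, 'y) ts" where
  "SA S l =
    \<lparr> St = Pi S l,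
      St0 = {win l 0 (Obs S \<circ> xs) us | n xs us. int_beh S n xs us},
      Inp = Inp S,
      Tr = {(\<zeta>, u, \<zeta>'). \<zeta> \<in> Pi S l \<and> \<zeta>' \<in> Pi S l \<and> u \<in> Inp S
              \<and> tl (fst \<zeta>) = butlast (fst \<zeta>') \<and> tl (snd \<zeta>) = butlast (snd \<zeta>')
              \<and> (snd \<zeta>' \<noteq> [] \<longrightarrow> last (snd \<zeta>') = Some u)
              \<and> (fst \<zeta> @ [last (fst \<zeta>')], snd \<zeta> @ [Some u]) \<in> Pi S (Suc l)},
      Out = Out S,
      Obs = (\<lambda>\<zeta>. the (last (fst \<zeta>))) \<rparr>"

definition is_SR :: "('a, 'u, 'y) ts \<Rightarrow> ('b, 'u, 'y) ts \<Rightarrow> ('a \<times> 'b) set \<Rightarrow> bool" where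
  "is_SR Sa Sb R \<longleftrightarrow>
     R \<subseteq> St Sa \<times> St Sb
   \<and> (\<forall>xa0\<in>St0 Sa. \<exists>xb0\<in>St0 Sb. (xa0, xb0) \<in> R)
   \<and> (\<forall>(xa, xb)\<in>R. Obs Sa xa = Obs Sb xb)
   \<and> (\<forall>(xa, xb)\<in>R. Uen Sa xa \<subseteq> Uen Sb xb
        \<and> (\<forall>u\<in>Uen Sa xa. \<forall>xa'. (xa, u, xa') \<in> Tr Sa \<longrightarrow>
              (\<exists>xb'. (xb, u, xb') \<in> Tr Sb \<and> (xa', xb') \<in> R)))"

definition is_ASR :: "('b, 'u, 'y) ts \<Rightarrow> ('a, 'u, 'y) ts \<Rightarrow> ('b \<times> 'a) set \<Rightarrow> bool" where
  "is_ASR Sb Sa R \<longleftrightarrow>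
     R \<subseteq> St Sb \<times> St Sa
   \<and> (\<forall>xb0\<in>St0 Sb. \<exists>xa0\<in>St0 Sa. (xb0, xa0) \<in> R)
   \<and> (\<forall>(xb, xa)\<in>R. Obs Sb xb = Obs Sa xa)
   \<and> (\<forall>(xb, xa)\<in>R. Uen Sb xb \<subseteq> Uen Sa xa
        \<and> (\<forall>u\<in>Uen Sb xb. \<forall>xa'. (xa, u, xa') \<in> Tr Sa \<longrightarrow>
              (\<exists>xb'. (xb, u, xb') \<in> Tr Sb \<and> (xb', xa') \<in> R)))"

end

theory Submission
  imports Defs
begin

(* Since S is
   non-blocking, every behaviour can be prolonged beyond l + 1 steps; so for a transition
   x -u-> x' the window ending at x and the window ending at x' are consecutive windows of
   one long behaviour, and consecutive windows of a behaviour are a transition of S_l.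
   With free input every input is enabled at x, which gives the inclusion of enabled
   inputs needed for the alternating simulation. *)

lemma is_SR_I:
  assumes "R \<subseteq> St Sa \<times> St Sb"
    and "\<forall>xa0\<in>St0 Sa. \<exists>xb0\<in>St0 Sb. (xa0, xb0) \<in> R"
    and "\<And>xa xb. (xa, xb) \<in> R \<Longrightarrow> Obs Sa xa = Obs Sb xb"
    and step: "\<And>xa xb u xa'. (xa, xb) \<in> R \<Longrightarrow> (xa, u, xa') \<in> Tr Sa \<Longrightarrow>
      \<exists>xb'. (xb, u, xb') \<in> Tr Sb \<and> (xa', xb') \<in> R"
  shows "is_SR Sa Sb R"
proof -
  have "Uen Sa xa \<subseteq> Uen Sb xb" if "(xa, xb) \<in> R" for xa xb
    using step[OF that] unfolding Uen_def Post_def by blast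
  with assms show ?thesis
    unfolding is_SR_def by (auto simp: case_prod_beta)
qed

lemma is_ASR_converse_if_is_SR:
  assumes "is_SR Sa Sb R"
    and "\<forall>xb0\<in>St0 Sb. \<exists>xa0\<in>St0 Sa. (xa0, xb0) \<in> R"
    and "\<And>xa xb. (xa, xb) \<in> R \<Longrightarrow> Uen Sb xb \<subseteq> Uen Sa xa"
  shows "is_ASR Sb Sa (converse R)"
proof -
  from assms(1) have "R \<subseteq> St Sa \<times> St Sb"
    and obs: "\<And>xa xb. (xa, xb) \<in> R \<Longrightarrow> Obs Sa xa = Obs Sb xb"
    and step: "\<And>xa xb u xa'. (xa, xb) \<in> R \<Longrightarrow> u \<in> Uen Sa xa \<Longrightarrow> (xa, u, xa') \<in> Tr Sa \<Longrightarrow>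
      \<exists>xb'. (xb, u, xb') \<in> Tr Sb \<and> (xa', xb') \<in> R"
    unfolding is_SR_def by auto
  moreover have "\<exists>xb'. (xb, u, xb') \<in> Tr Sb \<and> (xa', xb') \<in> R"
    if "(xa, xb) \<in> R" "u \<in> Uen Sb xb" "(xa, u, xa') \<in> Tr Sa" for xa xb u xa'
    using step[OF that(1) _ that(3)] assms(3)[OF that(1)] that(2) by blast
  ultimately show ?thesis
    using assms(2,3) unfolding is_ASR_def by fastforce
qed

lemma ts_wf_St0_St: "ts_wf S \<Longrightarrow> x \<in> St0 S \<Longrightarrow> x \<in> St S"
  unfolding ts_wf_def by auto

lemma ts_wf_Tr: "ts_wf S \<Longrightarrow> (x, u, x') \<in> Tr S \<Longrightarrow> u \<in> Inp S \<and> x' \<in> St S"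
  unfolding ts_wf_def by auto

lemma int_beh_mono: "int_beh S n xs us \<Longrightarrow> m \<le> n \<Longrightarrow> int_beh S m xs us"
  unfolding int_beh_def by auto

lemma int_beh_snoc:
  assumes "int_beh S n xs us" and "(xs n, u, x') \<in> Tr S"
  shows "int_beh S (Suc n) (xs(Suc n := x')) (us(n := u))"
  using assms unfolding int_beh_def by (auto simp: less_Suc_eq)

lemma int_beh_in_St:
  assumes "ts_wf S" and "int_beh S n xs us" and "i \<le> n"
  shows "xs i \<in> St S"
  using assms(3)
proof (induction i)
  case 0
  have "xs 0 \<in> St0 S" using assms(2) unfolding int_beh_def by simp
  then show ?case by (rule ts_wf_St0_St[OF assms(1)])
next
  case (Suc i)
  then have "(xs i, us i, xs (Suc i)) \<in> Tr S" using assms(2) unfolding int_beh_def by auto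
  then show ?case using ts_wf_Tr[OF assms(1)] by blast
qed

lemma int_beh_extend:
  assumes "ts_wf S" and "non_blocking S" and "int_beh S n xs us" and "n \<le> m"
  obtains xs' us' where "int_beh S m xs' us'" "\<forall>i\<le>n. xs' i = xs i" "\<forall>i<n. us' i = us i"
proof -
  have "\<exists>xs' us'. int_beh S m xs' us' \<and> (\<forall>i\<le>n. xs' i = xs i) \<and> (\<forall>i<n. us' i = us i)"
    using assms(4)
  proof (induction m rule: dec_induct)
    case base
    then show ?case using assms(3) by blast
  next
    case (step m)
    then obtain xs' us' where beh: "int_beh S m xs' us'"
      and agree: "\<forall>i\<le>n. xs' i = xs i" "\<forall>i<n. us' i = us i"
      by blast
    have "xs' m \<in> St S" using int_beh_in_St[OF assms(1) beh] by simp
    then obtain v y where "(xs' m, v, y) \<in> Tr S"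
      using assms(2) unfolding non_blocking_def Uen_def Post_def by blast
    then have "int_beh S (Suc m) (xs'(Suc m := y)) (us'(m := v))"
      by (rule int_beh_snoc[OF beh])
    moreover have "\<forall>i\<le>n. (xs'(Suc m := y)) i = xs i" and "\<forall>i<n. (us'(m := v)) i = us i"
      using agree step(1) by auto
    ultimately show ?case by blast
  qed
  then show ?thesis using that by blast
qed

lemma last_fst_win: "last (fst (win l k f g)) = Some (f k)"
  by (simp add: win_def last_map)

lemma win_cong:
  assumes "\<forall>i\<le>k. f i = f' i" and "\<forall>i<k. g i = g' i"
  shows "win l k f g = win l k f' g'"
  using assms unfolding win_def by auto

lemma win_Suc_Suc:
  "win (Suc l) (Suc k) f g =
     (fst (win l k f g) @ [last (fst (win l (Suc k) f g))], snd (win l k f g) @ [Some (g k)])"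
  unfolding win_def by (auto intro!: nth_equalityI simp: nth_append last_map)

lemma tl_fst_win: "tl (fst (win l k f g)) = butlast (fst (win l (Suc k) f g))"
  unfolding win_def by (auto intro!: nth_equalityI simp del: upt_Suc simp: nth_tl nth_butlast)

lemma tl_snd_win: "tl (snd (win l k f g)) = butlast (snd (win l (Suc k) f g))"
  unfolding win_def by (auto intro!: nth_equalityI simp: nth_tl nth_butlast)

lemma last_snd_win: "snd (win l (Suc k) f g) \<noteq> [] \<Longrightarrow> last (snd (win l (Suc k) f g)) = Some (g k)"
  unfolding win_def by (auto simp: last_map)

lemma win_in_Pi: "int_beh S n xs us \<Longrightarrow> l < n \<Longrightarrow> k \<le> n \<Longrightarrow> win l k (Obs S \<circ> xs) us \<in> Pi S l"
  unfolding Pi_def by blast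

lemma win_in_Estr:
  "int_beh S n xs us \<Longrightarrow> l < n \<Longrightarrow> k \<le> n \<Longrightarrow> win l k (Obs S \<circ> xs) us \<in> Estr S l (xs k)"
  unfolding Estr_def using win_in_Pi by blast

lemma Obs_SA_Estr: "\<zeta> \<in> Estr S l x \<Longrightarrow> Obs (SA S l) \<zeta> = Obs S x"
  unfolding Estr_def SA_def by (auto simp: last_fst_win)

lemma Uen_SA_subset: "Uen (SA S l) \<zeta> \<subseteq> Inp S"
  unfolding Uen_def Post_def SA_def by auto

lemma consecutive_wins_Tr_SA:
  assumes "ts_wf S" and "int_beh S n xs us" and "Suc l < n" and "k < n"
  shows "(win l k (Obs S \<circ> xs) us, us k, win l (Suc k) (Obs S \<circ> xs) us) \<in> Tr (SA S l)"
proof -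
  have "(xs k, us k, xs (Suc k)) \<in> Tr S"
    using assms(2,4) unfolding int_beh_def by blast
  then have "us k \<in> Inp S"
    using ts_wf_Tr[OF assms(1)] by blast
  moreover have "win (Suc l) (Suc k) (Obs S \<circ> xs) us \<in> Pi S (Suc l)"
    using assms(2-4) by (intro win_in_Pi) auto
  ultimately show ?thesis
    using assms(2-4) win_in_Pi[OF assms(2)]
    by (simp add: SA_def tl_fst_win tl_snd_win last_snd_win flip: win_Suc_Suc)
qed

lemma Estr_Tr_SA_step:
  assumes "ts_wf S" and "non_blocking S" and "\<zeta> \<in> Estr S l x" and "(x, u, x') \<in> Tr S"
  obtains \<zeta>' where "(\<zeta>, u, \<zeta>') \<in> Tr (SA S l)" and "\<zeta>' \<in> Estr S l x'"
proof -
  obtain n j xs us where beh: "int_beh S n xs us" and "j \<le> n"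
    and \<zeta>: "\<zeta> = win l j (Obs S \<circ> xs) us" and "xs j = x"
    using assms(3) unfolding Estr_def by blast
  then have "int_beh S (Suc j) (xs(Suc j := x')) (us(j := u))"
    using assms(4) by (intro int_beh_snoc int_beh_mono[OF beh]) auto
  then obtain xs' us' where beh': "int_beh S (Suc j + Suc l) xs' us'"
    and agree: "\<forall>i\<le>Suc j. xs' i = (xs(Suc j := x')) i" "\<forall>i<Suc j. us' i = (us(j := u)) i"
    by (rule int_beh_extend[OF assms(1,2) _ le_add1])
  have "\<zeta> = win l j (Obs S \<circ> xs') us'"
    unfolding \<zeta> using agree by (intro win_cong) auto
  moreover have "us' j = u" and "xs' (Suc j) = x'"
    using agree by auto
  ultimately have "(\<zeta>, u, win l (Suc j) (Obs S \<circ> xs') us') \<in> Tr (SA S l)"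
    and "win l (Suc j) (Obs S \<circ> xs') us' \<in> Estr S l x'"
    using consecutive_wins_Tr_SA[OF assms(1) beh', of l j] win_in_Estr[OF beh', of l "Suc j"]
    by auto
  then show ?thesis using that by blast
qed

lemma Estr_St0_SA_exists:
  assumes "ts_wf S" and "non_blocking S" and "x0 \<in> St0 S"
  obtains \<zeta>0 where "\<zeta>0 \<in> St0 (SA S l)" and "\<zeta>0 \<in> Estr S l x0"
proof -
  have "int_beh S 0 (\<lambda>_. x0) (\<lambda>_. undefined)"
    using assms(3) unfolding int_beh_def by simp
  then obtain xs us where beh: "int_beh S (Suc l) xs us" and "\<forall>i\<le>0. xs i = x0"
    by (rule int_beh_extend[OF assms(1,2) _ le0])
  then have "win l 0 (Obs S \<circ> xs) us \<in> St0 (SA S l)"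
    and "win l 0 (Obs S \<circ> xs) us \<in> Estr S l x0"
    using win_in_Estr[OF beh, of l 0] unfolding SA_def by auto
  then show ?thesis using that by blast
qed

lemma St0_SA_in_Estr_St0:
  assumes "ts_wf S" and "non_blocking S" and "\<zeta>0 \<in> St0 (SA S l)"
  obtains x0 where "x0 \<in> St0 S" and "\<zeta>0 \<in> Estr S l x0"
proof -
  obtain n xs us where \<zeta>0: "\<zeta>0 = win l 0 (Obs S \<circ> xs) us" and beh: "int_beh S n xs us"
    using assms(3) unfolding SA_def by auto
  then have "xs 0 \<in> St0 S" unfolding int_beh_def by simp
  obtain xs' us' where beh': "int_beh S (Suc l) xs' us'" and "\<forall>i\<le>0. xs' i = xs i"
    by (rule int_beh_extend[OF assms(1,2) int_beh_mono[OF beh le0] le0])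
  then have "\<zeta>0 = win l 0 (Obs S \<circ> xs') us'"
    unfolding \<zeta>0 by (intro win_cong) auto
  then have "\<zeta>0 \<in> Estr S l (xs 0)"
    using win_in_Estr[OF beh', of l 0] \<open>\<forall>i\<le>0. xs' i = xs i\<close> by simp
  with \<open>xs 0 \<in> St0 S\<close> show ?thesis using that by blast
qed

lemma Estr_subset_St_SA: "Estr S l x \<subseteq> St (SA S l)"
  unfolding Estr_def SA_def by auto

lemma is_SR_Estr:
  assumes "ts_wf S" and "non_blocking S"
  shows "is_SR S (SA S l) {(x, \<zeta>). x \<in> St S \<and> \<zeta> \<in> St (SA S l) \<and> \<zeta> \<in> Estr S l x}"
    (is "is_SR _ _ ?R")
proof (rule is_SR_I)
  show "?R \<subseteq> St S \<times> St (SA S l)" by blast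
  show "\<forall>x0\<in>St0 S. \<exists>\<zeta>0\<in>St0 (SA S l). (x0, \<zeta>0) \<in> ?R"
  proof
    fix x0
    assume "x0 \<in> St0 S"
    moreover obtain \<zeta>0 where "\<zeta>0 \<in> St0 (SA S l)" and "\<zeta>0 \<in> Estr S l x0"
      using Estr_St0_SA_exists[OF assms \<open>x0 \<in> St0 S\<close>] .
    moreover have "x0 \<in> St S"
      using assms(1) \<open>x0 \<in> St0 S\<close> by (rule ts_wf_St0_St)
    ultimately show "\<exists>\<zeta>0\<in>St0 (SA S l). (x0, \<zeta>0) \<in> ?R"
      using Estr_subset_St_SA by fast
  qed
  show "\<exists>\<zeta>'. (\<zeta>, u, \<zeta>') \<in> Tr (SA S l) \<and> (x', \<zeta>') \<in> ?R"
    if related: "(x, \<zeta>) \<in> ?R" and step: "(x, u, x') \<in> Tr S" for x \<zeta> u x'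
  proof -
    obtain \<zeta>' where "(\<zeta>, u, \<zeta>') \<in> Tr (SA S l)" and "\<zeta>' \<in> Estr S l x'"
      using Estr_Tr_SA_step[OF assms _ step] related by blast
    moreover have "x' \<in> St S"
      using ts_wf_Tr[OF assms(1) step] by (rule conjunct2)
    ultimately show ?thesis using Estr_subset_St_SA by fast
  qed
  show "Obs S x = Obs (SA S l) \<zeta>" if "(x, \<zeta>) \<in> ?R" for x \<zeta>
    using that Obs_SA_Estr[of \<zeta> S l x] by simp
qed

lemma is_ASR_converse_Estr:
  assumes "ts_wf S" and "non_blocking S" and "free_input S"
  shows "is_ASR (SA S l) S (converse {(x, \<zeta>). x \<in> St S \<and> \<zeta> \<in> St (SA S l) \<and> \<zeta> \<in> Estr S l x})"
    (is "is_ASR _ _ (converse ?R)")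
proof (rule is_ASR_converse_if_is_SR[OF is_SR_Estr[OF assms(1,2)]])
  show "\<forall>\<zeta>0\<in>St0 (SA S l). \<exists>x0\<in>St0 S. (x0, \<zeta>0) \<in> ?R"
  proof
    fix \<zeta>0
    assume "\<zeta>0 \<in> St0 (SA S l)"
    then obtain x0 where "x0 \<in> St0 S" and "\<zeta>0 \<in> Estr S l x0"
      by (rule St0_SA_in_Estr_St0[OF assms(1,2)])
    moreover have "x0 \<in> St S"
      using assms(1) \<open>x0 \<in> St0 S\<close> by (rule ts_wf_St0_St)
    ultimately show "\<exists>x0\<in>St0 S. (x0, \<zeta>0) \<in> ?R"
      using Estr_subset_St_SA by fast
  qed
  show "Uen (SA S l) \<zeta> \<subseteq> Uen S x" if "(x, \<zeta>) \<in> ?R" for x \<zeta>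
  proof -
    from that have "x \<in> St S" by simp
    then have "Uen S x = Inp S"
      using assms(3) by (simp add: free_input_def)
    with Uen_SA_subset[of S l \<zeta>] show ?thesis by simp
  qed
qed

theorem proposition1:
  fixes S :: "('x, 'u, 'y) ts" and l :: nat
  assumes "ts_wf S" and "non_blocking S" and "free_input S" and "deterministic S"
    and "St0 S = St S"
  shows "is_SR S (SA S l) {(x, \<zeta>). x \<in> St S \<and> \<zeta> \<in> St (SA S l) \<and> \<zeta> \<in> Estr S l x}
       \<and> is_ASR (SA S l) S (converse {(x, \<zeta>). x \<in> St S \<and> \<zeta> \<in> St (SA S l) \<and> \<zeta> \<in> Estr S l x})"
  using is_SR_Estr[OF assms(1,2)] is_ASR_converse_Estr[OF assms(1-3)] by blast

end
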